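(* There is an absolute constant $K>0$ such that the following holds. Let $C\ge1$ be an integer and let $\xi\in(0,1)$ be an irrational number with partial quotients bounded by $C$. Let $N\ge 2$ and $1\le a\le N-1$ be integers with $\gcd(a,N)=1$, and put $\delta = \left|\xi - \frac{a}{N}\right|$. Then $\mathrm{gen}(a,N-a)$ is a binary word with exactly $N-1$ distinct subsequences and of length at most \[ K\left( C\log N + N\sqrt{\delta C^3}\right). \]
   Context: An irrational number $\theta$ with continued fraction $[c_0;c_1,c_2,\ldots]$ has partial quotients bounded by $C$ if $c_i\le C$ for all $i\ge0$. Words are over $\{\mathsf{A},\mathsf{B}\}$; the number of subsequences of a word counts distinct subsequences (not necessarily contiguous), the empty one included. For coprime integers $a,b\ge1$, $\mathrm{gen}(a,b)$ is defined recursively by: $\mathrm{gen}(1,1)$ is the empty word; $\mathrm{gen}(a,b)=\mathsf{A}\circ\mathrm{gen}(a-b,b)$ if $a>b$; $\mathrm{gen}(a,b)=\mathsf{B}\circ\mathrm{gen}(a,b-a)$ if $b>a$, where $\circ$ is concatenation. *)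

theory Defs
  imports Complex_Main "HOL-Library.Sublist"
begin

datatype letter = A | B

function gen :: "nat \<Rightarrow> nat \<Rightarrow> letter list" where
  "gen a b = (if a = 0 \<or> b = 0 \<or> a = b then []
              else if a > b then A # gen (a - b) b
              else B # gen a (b - a))"
  by pat_completeness auto
termination by (relation "measure (\<lambda>(a,b). a + b)") auto

definition num_subseqs :: "'a list \<Rightarrow> nat" where
  "num_subseqs w = card {v. subseq v w}"

fun cf_rem :: "real \<Rightarrow> nat \<Rightarrow> real" where
  "cf_rem x 0 = x"
| "cf_rem x (Suc n) = 1 / frac (cf_rem x n)"

definition partial_quotient :: "real \<Rightarrow> nat \<Rightarrow> int" where
  "partial_quotient x n = \<lfloor>cf_rem x n\<rfloor>"

definition pq_bounded_by :: "real \<Rightarrow> int \<Rightarrow> bool" where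
  "pq_bounded_by x C \<longleftrightarrow> (\<forall>i. partial_quotient x i \<le> C)"

end

theory Submission
  imports Defs
begin

(* The word gen a b is the Stern--Brocot path to a/(a+b). Splitting subsequences by their first
   letter, the numbers of subsequences starting with A and with B satisfy the same subtraction
   recursion as (a, b), which gives a + b - 1 subsequences in total.

   For the length, descend the Stern--Brocot tree towards a/N and towards \<xi> simultaneously.
   While the two paths agree, bounded partial quotients keep the denominators q, q' of the
   current interval within a factor C + 3 of each other, so q + q' grows geometrically and there
   are O(C log N) common steps. Where the paths separate, \<xi> and a/N lie on opposite sides of the
   mediant, which forces (a + b)^2 = O(C^2 \<delta> N^2) for the remaining pair (a, b); the rest of the
   word has length at most a + b. *)

section \<open>Counting subsequences\<close>

declare gen.simps [simp del]

lemma gen_diag: "gen a a = []"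
  and gen_gt: "b < a \<Longrightarrow> 0 < b \<Longrightarrow> gen a b = A # gen (a - b) b"
  and gen_lt: "a < b \<Longrightarrow> 0 < a \<Longrightarrow> gen a b = B # gen a (b - a)"
  by (subst gen.simps; simp)+

lemma length_gen_le: "length (gen a b) \<le> a + b"
  by (induction a b rule: gen.induct) (subst gen.simps; auto)

lemma num_subseqs_first_letter:
  "num_subseqs w = 1 + card {v. subseq (A # v) w} + card {v. subseq (B # v) w}"
proof -
  define S where "S x = {v. subseq (x # v) w}" for x
  have "finite {v. subseq v w}"
    by (metis List.finite_set set_subseqs_eq)
  then have fin: "finite (S x)" for x
    unfolding S_def by (rule finite_subset[rotated]) (auto dest: subseq_Cons')
  have split: "{v. subseq v w} = insert [] (Cons A ` S A \<union> Cons B ` S B)"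
  proof (rule set_eqI)
    fix v show "v \<in> {v. subseq v w} \<longleftrightarrow> v \<in> insert [] (Cons A ` S A \<union> Cons B ` S B)"
      unfolding S_def by (cases v; cases "hd v") auto
  qed
  have "card (Cons A ` S A \<union> Cons B ` S B) = card (S A) + card (S B)"
    using fin by (subst card_Un_disjoint) (auto simp: card_image)
  moreover have "card (insert [] (Cons A ` S A \<union> Cons B ` S B)) = Suc (card (Cons A ` S A \<union> Cons B ` S B))"
    using fin by (intro card_insert_disjoint) auto
  ultimately show ?thesis
    unfolding num_subseqs_def split by (simp add: S_def)
qed

lemma card_subseqs_Cons_gen:
  assumes "coprime a b" "0 < a" "0 < b"
  shows "card {v. subseq (A # v) (gen a b)} = a - 1 \<and> card {v. subseq (B # v) (gen a b)} = b - 1"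
  using assms
proof (induction a b rule: gen.induct)
  case (1 a b)
  consider "a = b" | "b < a" | "a < b" by linarith
  then show ?case
  proof cases
    case 1
    with "1.prems" show ?thesis by (simp add: gen_diag)
  next
    case 2
    have "coprime (a - b) b"
      using "1.prems"(1) 2 by (simp add: coprime_iff_gcd_eq_1 gcd_diff1_nat)
    then have "num_subseqs (gen (a - b) b) = a - 1"
        "card {v. subseq (B # v) (gen (a - b) b)} = b - 1"
      using "1.IH"(1) "1.prems" 2 num_subseqs_first_letter[of "gen (a - b) b"] by auto
    then show ?thesis
      using 2 "1.prems" by (simp add: gen_gt num_subseqs_def)
  next
    case 3
    have "coprime a (b - a)"
      using "1.prems"(1) 3 by (metis coprime_iff_gcd_eq_1 gcd.commute gcd_diff1_nat less_imp_le)
    then have "num_subseqs (gen a (b - a)) = b - 1"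
        "card {v. subseq (A # v) (gen a (b - a))} = a - 1"
      using "1.IH"(2) "1.prems" 3 num_subseqs_first_letter[of "gen a (b - a)"] by auto
    then show ?thesis
      using 3 "1.prems" by (simp add: gen_lt num_subseqs_def)
  qed
qed

lemma num_subseqs_gen:
  "coprime a b \<Longrightarrow> 0 < a \<Longrightarrow> 0 < b \<Longrightarrow> num_subseqs (gen a b) = a + b - 1"
  using num_subseqs_first_letter card_subseqs_Cons_gen by fastforce

section \<open>Tails of a continued fraction\<close>

lemma cf_rem_irrational: "x \<notin> \<rat> \<Longrightarrow> cf_rem x k \<notin> \<rat>"
proof (induction k)
  case (Suc k)
  have "frac (cf_rem x k) \<notin> \<rat>"
    using Suc by (metis Rats_add Rats_of_int frac_def diff_add_cancel)
  then show ?case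
    by (metis Rats_inverse cf_rem.simps(2) inverse_eq_divide inverse_inverse_eq)
qed simp

lemma cf_rem_gt_1:
  assumes "x \<notin> \<rat>" "0 < k"
  shows "1 < cf_rem x k"
proof -
  obtain j where k: "k = Suc j" using assms(2) by (cases k) auto
  have "cf_rem x j \<notin> \<int>"
    using cf_rem_irrational[OF assms(1)] Ints_subset_Rats by blast
  then have "0 < frac (cf_rem x j)" by simp
  then show ?thesis
    using frac_lt_1[of "cf_rem x j"] by (simp add: k)
qed

lemma cf_rem_less: "pq_bounded_by x C \<Longrightarrow> cf_rem x k < real_of_int C + 1"
  unfolding pq_bounded_by_def partial_quotient_def by (metis floor_le_iff not_le)

(* The ratio a/b of gen a b after one letter: (a, b) becomes (a - b, b) if a > b and (a, b - a)
   if a < b. *)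
definition sb_step :: "real \<Rightarrow> real" where
  "sb_step r = (if 1 < r then r - 1 else r / (1 - r))"

definition cf_tails :: "real \<Rightarrow> real set" where
  "cf_tails x = {t. 0 < t \<and> (\<exists>k > 0. \<exists>i::nat. t = cf_rem x k - i)}"

(* Contains the ratios met along the Stern--Brocot path of x, starting from x / (1 - x). *)
definition sb_ratios :: "real \<Rightarrow> real set" where
  "sb_ratios x = {r. r \<in> cf_tails x \<or> 1 / r \<in> cf_tails x}"

context
  fixes x :: real
  assumes irrational: "x \<notin> \<rat>"
begin

lemma cf_tails_neq_1: "t \<in> cf_tails x \<Longrightarrow> t \<noteq> 1"
proof
  assume "t \<in> cf_tails x" "t = 1"
  then obtain k i where "t = cf_rem x k - real i"
    unfolding cf_tails_def by auto
  with \<open>t = 1\<close> have "cf_rem x k = 1 + real i" by simp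
  then show False
    using cf_rem_irrational[OF irrational, of k] by simp
qed

lemma cf_tails_reciprocal: "t \<in> cf_tails x \<Longrightarrow> t < 1 \<Longrightarrow> 1 / t \<in> cf_tails x"
proof -
  assume "t \<in> cf_tails x" "t < 1"
  then obtain k i where k: "0 < k" "0 < t" "t = cf_rem x k - real i"
    unfolding cf_tails_def by blast
  then have "frac (cf_rem x k) = t"
    using \<open>t < 1\<close> by (simp add: frac_unique_iff)
  then have "1 / t = cf_rem x (Suc k) - real 0" by simp
  then show ?thesis
    using k(2) unfolding cf_tails_def by (intro CollectI conjI exI[of _ "Suc k"] exI[of _ 0]) auto
qed

lemma cf_tails_minus_1: "t \<in> cf_tails x \<Longrightarrow> 1 < t \<Longrightarrow> t - 1 \<in> cf_tails x"
  unfolding cf_tails_def by (force intro: exI[of _ "Suc _"])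

lemma sb_ratios_gt_1_imp_cf_tails: "r \<in> sb_ratios x \<Longrightarrow> 1 < r \<Longrightarrow> r \<in> cf_tails x"
  unfolding sb_ratios_def using cf_tails_reciprocal[of "1 / r"] by auto

lemma sb_ratios_lt_1_imp_cf_tails: "r \<in> sb_ratios x \<Longrightarrow> r < 1 \<Longrightarrow> 1 / r \<in> cf_tails x"
  unfolding sb_ratios_def using cf_tails_reciprocal[of r] cf_tails_def by force

lemma sb_ratios_pos: "r \<in> sb_ratios x \<Longrightarrow> 0 < r"
  unfolding sb_ratios_def cf_tails_def by (auto simp: zero_less_divide_1_iff)

lemma sb_ratios_neq_1: "r \<in> sb_ratios x \<Longrightarrow> r \<noteq> 1"
  unfolding sb_ratios_def using cf_tails_neq_1 by force

lemma sb_step_sb_ratios: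
  assumes "r \<in> sb_ratios x"
  shows "sb_step r \<in> sb_ratios x"
proof (cases "1 < r")
  case True
  then have "r - 1 \<in> cf_tails x"
    using assms by (intro cf_tails_minus_1 sb_ratios_gt_1_imp_cf_tails)
  then show ?thesis
    using True by (simp add: sb_step_def sb_ratios_def)
next
  case False
  then have "r < 1" "0 < r"
    using sb_ratios_neq_1[OF assms] sb_ratios_pos[OF assms] by auto
  then have "1 / r - 1 \<in> cf_tails x"
    using assms by (intro cf_tails_minus_1 sb_ratios_lt_1_imp_cf_tails) auto
  moreover have "1 / (r / (1 - r)) = 1 / r - 1"
    using \<open>r < 1\<close> \<open>0 < r\<close> by (simp add: field_simps)
  ultimately show ?thesis
    using False by (simp add: sb_step_def sb_ratios_def)
qed

lemma sb_ratios_start: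
  assumes "0 < x" "x < 1"
  shows "x / (1 - x) \<in> sb_ratios x"
proof -
  have "1 / (x / (1 - x)) = cf_rem x 1 - real 1"
    using assms by (simp add: frac_eq field_simps)
  moreover have "1 < cf_rem x 1"
    by (rule cf_rem_gt_1[OF irrational]) simp
  ultimately show ?thesis
    unfolding sb_ratios_def cf_tails_def by (intro CollectI disjI2 conjI exI[of _ 1] exI[of _ 1]) auto
qed

lemma sb_ratios_bounded:
  assumes "pq_bounded_by x C" "r \<in> sb_ratios x"
  shows "r < real_of_int C + 1" "1 / r < real_of_int C + 1"
proof -
  have tails_less: "t < real_of_int C + 1" if t: "t \<in> cf_tails x" for t
  proof -
    obtain k i where "t = cf_rem x k - real i"
      using t unfolding cf_tails_def by blast
    then show ?thesis
      using cf_rem_less[OF assms(1), of k] by simp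
  qed
  have one_less: "1 < real_of_int C + 1"
    using cf_rem_gt_1[OF irrational, of 1] cf_rem_less[OF assms(1), of 1] by simp
  have "0 < r" "r \<noteq> 1"
    using sb_ratios_pos sb_ratios_neq_1 assms(2) by auto
  then consider "r < 1" "1 < 1 / r" | "1 < r" "1 / r < 1"
    by (cases "r < 1") auto
  then have "r < real_of_int C + 1 \<and> 1 / r < real_of_int C + 1"
  proof cases
    case 1
    then show ?thesis
      using one_less tails_less[OF sb_ratios_lt_1_imp_cf_tails[OF assms(2)]] by linarith
  next
    case 2
    then show ?thesis
      using one_less tails_less[OF sb_ratios_gt_1_imp_cf_tails[OF assms(2)]] by linarith
  qed
  then show "r < real_of_int C + 1" "1 / r < real_of_int C + 1"
    by auto
qed

end

section \<open>Joint Stern--Brocot descent\<close>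

lemma square_le_of_gap:
  fixes a b q q' s D g K :: real
  assumes "0 \<le> a" "0 \<le> b" "0 < s" "0 \<le> g"
    and gap: "s * (a + b) \<le> g * D"
    and D_le: "D \<le> s * (q + q')"
    and comparable: "q + q' \<le> K * q" "q + q' \<le> K * q'"
  shows "(a + b)\<^sup>2 \<le> g * K * (a * q + b * q')"
proof -
  have "(a + b) * (q + q') \<le> a * (K * q) + b * (K * q')"
    using assms by (simp add: distrib_right add_mono mult_left_mono)
  then have weighted: "(a + b) * (q + q') \<le> K * (a * q + b * q')"
    by (simp add: algebra_simps)
  have "s * (a + b)\<^sup>2 \<le> g * D * (a + b)"
    using mult_right_mono[OF gap, of "a + b"] assms(1,2) by (simp add: power2_eq_square mult.assoc)
  also have "\<dots> \<le> g * (s * (q + q')) * (a + b)"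
    using D_le assms(1,2,4) by (intro mult_right_mono mult_left_mono) auto
  also have "\<dots> = g * s * ((a + b) * (q + q'))"
    by (simp add: algebra_simps)
  also have "\<dots> \<le> g * s * (K * (a * q + b * q'))"
    using weighted assms(3,4) by (intro mult_left_mono) auto
  also have "\<dots> = s * (g * K * (a * q + b * q'))"
    by (simp add: algebra_simps)
  finally show ?thesis
    using \<open>0 < s\<close> by (rule mult_left_le_imp_le)
qed

locale sb_descent =
  fixes c :: real and R :: "real set"
  assumes ratio_pos: "r \<in> R \<Longrightarrow> 0 < r"
    and ratio_less: "r \<in> R \<Longrightarrow> r < c + 1"
    and inverse_ratio_less: "r \<in> R \<Longrightarrow> 1 / r < c + 1"
    and sb_step_closed: "r \<in> R \<Longrightarrow> sb_step r \<in> R"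
begin

(* sb_step 1 = 1 / 0 = 0 is not in R. *)
lemma ratio_neq_1: "r \<in> R \<Longrightarrow> r \<noteq> 1"
  using ratio_pos sb_step_closed by (force simp: sb_step_def)

context
  fixes e :: real and N :: nat
begin

(* The paths of a/N and of x have agreed so far. The current Stern--Brocot interval has endpoint
   denominators q (right) and q' (left), and the rest of the path of a/N is gen a b, so
   N = a q + b q'. The point x divides the interval in ratio r : 1; with e = N x - a the
   numerators are eliminated by r b - a = e (r q + q'). The last two conjuncts keep q and q'
   within a factor c + 3 of each other. *)
definition joint_state :: "nat \<Rightarrow> nat \<Rightarrow> nat \<Rightarrow> nat \<Rightarrow> real \<Rightarrow> bool" where
  "joint_state a b q q' r \<longleftrightarrow> 0 < a \<and> 0 < b \<and> 0 < q \<and> 0 < q' \<and> r \<in> R \<and>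
     N = a * q + b * q' \<and> r * real b - real a = e * (r * real q + real q') \<and>
     r * real q + real q' < (c + 2) * real q \<and> r * real q + real q' < (c + 2) * r * real q'"

lemma joint_state_step_A:
  assumes st: "joint_state a b q q' r" and "b < a" "1 < r"
  shows "joint_state (a - b) b q (q + q') (r - 1)"
proof -
  have R: "r - 1 \<in> R"
    using st sb_step_closed \<open>1 < r\<close> by (force simp: joint_state_def sb_step_def)
  then have "1 < (c + 1) * (r - 1)"
    using inverse_ratio_less[OF R] \<open>1 < r\<close> by (simp add: field_simps)
  then have "1 * real (q + q') < (c + 1) * (r - 1) * real (q + q')"
    using st by (intro mult_strict_right_mono) (auto simp: joint_state_def)
  moreover have "(r - 1) * real q \<le> (r - 1) * real (q + q')"
    using \<open>1 < r\<close> by (intro mult_left_mono) auto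
  ultimately have bound2: "(r - 1) * real q + real (q + q') < (c + 2) * (r - 1) * real (q + q')"
    by (simp add: algebra_simps)
  have D': "(r - 1) * real q + real (q + q') = r * real q + real q'"
    by (simp add: algebra_simps)
  have "(r - 1) * real b - real (a - b) = r * real b - real a"
    using \<open>b < a\<close> by (simp add: algebra_simps)
  moreover have "(a - b) * q + b * (q + q') = a * q + b * q'"
    using \<open>b < a\<close> by (simp add: distrib_left add.assoc[symmetric] add_mult_distrib[symmetric])
  ultimately show ?thesis
    using st R bound2 \<open>b < a\<close> unfolding joint_state_def D' by simp
qed

lemma joint_state_step_B:
  assumes st: "joint_state a b q q' r" and "a < b" "r < 1"
  shows "joint_state a (b - a) (q + q') q' (r / (1 - r))"
proof -
  define r' where "r' = r / (1 - r)"
  have R: "r' \<in> R"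
    using st sb_step_closed \<open>r < 1\<close> by (force simp: joint_state_def sb_step_def r'_def)
  have "0 < 1 - r"
    using \<open>r < 1\<close> by simp
  have D': "r' * real (q + q') + real q' = (r * real q + real q') / (1 - r)"
    using \<open>0 < 1 - r\<close> by (simp add: r'_def field_simps)
  have "r' * real (q + q') < (c + 1) * real (q + q')"
    using ratio_less[OF R] st by (intro mult_strict_right_mono) (auto simp: joint_state_def)
  then have bound1: "r' * real (q + q') + real q' < (c + 2) * real (q + q')"
    by (simp add: algebra_simps)
  have "(r * real q + real q') / (1 - r) < (c + 2) * r * real q' / (1 - r)"
    using st \<open>0 < 1 - r\<close> by (simp add: joint_state_def divide_strict_right_mono)
  then have bound2: "r' * real (q + q') + real q' < (c + 2) * r' * real q'"
    unfolding D' by (simp add: r'_def)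
  have "r' * real (b - a) - real a = (r * real b - real a) / (1 - r)"
    using \<open>0 < 1 - r\<close> \<open>a < b\<close> by (simp add: r'_def field_simps)
  then have "r' * real (b - a) - real a = e * (r' * real (q + q') + real q')"
    unfolding D' using st by (simp add: joint_state_def)
  moreover have "a * (q + q') + (b - a) * q' = a * q + b * q'"
    using \<open>a < b\<close> by (simp add: distrib_left add.assoc add_mult_distrib[symmetric])
  ultimately show ?thesis
    using st R bound1 bound2 \<open>a < b\<close> unfolding joint_state_def r'_def[symmetric] by simp
qed

lemma joint_state_comparable:
  assumes st: "joint_state a b q q' r"
  shows "real (q + q') \<le> (c + 3) * real q" "real (q + q') \<le> (c + 3) * real q'"
proof -
  have "0 < r"
    using st ratio_pos by (simp add: joint_state_def)
  then have "0 < r * real q"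
    using st by (simp add: joint_state_def)
  then show "real (q + q') \<le> (c + 3) * real q"
    using st by (simp add: joint_state_def algebra_simps)
  have "r * real q < r * ((c + 2) * real q')"
    using st by (simp add: joint_state_def algebra_simps)
  then have "real q < (c + 2) * real q'"
    using \<open>0 < r\<close> by simp
  then show "real (q + q') \<le> (c + 3) * real q'"
    by (simp add: algebra_simps)
qed

lemma joint_state_denominators_le:
  assumes st: "joint_state a b q q' r"
  shows "q + q' \<le> N"
proof -
  have "1 * q \<le> a * q" "1 * q' \<le> b * q'"
    using st by (intro mult_le_mono1; simp add: joint_state_def)+
  then show ?thesis
    using st unfolding joint_state_def by linarith
qed

(* The paths separate here: x and a/N fall on opposite sides of the mediant. *)
lemma joint_state_divergence:
  assumes st: "joint_state a b q q' r" and diverge: "b < a \<and> r < 1 \<or> a < b \<and> 1 < r"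
  shows "real (a + b) \<le> sqrt (2 * (c + 2) * (c + 3) * \<bar>e\<bar> * real N)"
proof -
  define D where "D = r * real q + real q'"
  have "0 < r" "sb_step r \<in> R"
    using st ratio_pos sb_step_closed by (auto simp: joint_state_def)
  have c_pos: "0 \<le> 2 * (c + 2)"
    using st ratio_pos ratio_less by (force simp: joint_state_def)
  have "0 < r * real q"
    using st \<open>0 < r\<close> by (simp add: joint_state_def)
  then have "0 < D"
    by (simp add: D_def add_pos_nonneg)
  then have eD: "\<bar>e\<bar> * D = \<bar>r * real b - real a\<bar>"
    using st by (simp add: D_def joint_state_def abs_mult)
  obtain s where "0 < s" and gap: "s * real (a + b) \<le> 2 * (c + 2) * \<bar>e\<bar> * D"
    and D_le: "D \<le> s * real (q + q')"
    using diverge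
  proof (elim disjE conjE)
    assume "b < a" "r < 1"
    then have "r / (1 - r) < c + 1"
      using ratio_less \<open>sb_step r \<in> R\<close> by (force simp: sb_step_def)
    then have "1 \<le> (c + 2) * (1 - r)"
      using \<open>r < 1\<close> by (simp add: field_simps)
    have "r * real b \<le> r * real a"
      using \<open>b < a\<close> \<open>0 < r\<close> by simp
    have "1 * real (a + b) \<le> 2 * real a"
      using \<open>b < a\<close> by simp
    also have "\<dots> \<le> 2 * ((c + 2) * (1 - r)) * real a"
      using \<open>1 \<le> (c + 2) * (1 - r)\<close> by (intro mult_right_mono) auto
    also have "\<dots> = 2 * (c + 2) * (real a - r * real a)"
      by (simp add: algebra_simps)
    also have "\<dots> \<le> 2 * (c + 2) * \<bar>r * real b - real a\<bar>"
      using \<open>r * real b \<le> r * real a\<close> abs_ge_minus_self[of "r * real b - real a"]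
      by (intro mult_left_mono[OF _ c_pos]) linarith
    finally have "1 * real (a + b) \<le> 2 * (c + 2) * \<bar>e\<bar> * D"
      by (simp add: eD mult.assoc)
    moreover have "D \<le> 1 * real (q + q')"
      using \<open>r < 1\<close> \<open>0 < r\<close> by (simp add: D_def mult_left_le_one_le)
    ultimately show thesis
      using that[of 1] by simp
  next
    assume "a < b" "1 < r"
    then have "1 / (r - 1) < c + 1"
      using inverse_ratio_less \<open>sb_step r \<in> R\<close> by (force simp: sb_step_def)
    then have "r \<le> (c + 2) * (r - 1)"
      using \<open>1 < r\<close> by (simp add: field_simps)
    have "r * real (a + b) \<le> 2 * (r * real b)"
      using \<open>a < b\<close> \<open>0 < r\<close> by simp
    also have "\<dots> \<le> 2 * ((c + 2) * (r - 1)) * real b"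
      using mult_right_mono[OF \<open>r \<le> (c + 2) * (r - 1)\<close>, of "2 * real b"]
      by (simp add: algebra_simps)
    also have "\<dots> = 2 * (c + 2) * (r * real b - real b)"
      by (simp add: algebra_simps)
    also have "\<dots> \<le> 2 * (c + 2) * \<bar>r * real b - real a\<bar>"
      using \<open>a < b\<close> abs_ge_self[of "r * real b - real a"]
      by (intro mult_left_mono[OF _ c_pos]) linarith
    finally have "r * real (a + b) \<le> 2 * (c + 2) * \<bar>e\<bar> * D"
      by (simp add: eD mult.assoc)
    moreover have "D \<le> r * real (q + q')"
      using mult_right_mono[of 1 r "real q'"] \<open>1 < r\<close> by (simp add: D_def distrib_left)
    ultimately show thesis
      using that[of r] \<open>0 < r\<close> by simp
  qed
  have "(real a + real b)\<^sup>2 \<le> (2 * (c + 2) * \<bar>e\<bar>) * (c + 3) * (real a * real q + real b * real q')"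
  proof (rule square_le_of_gap[where s = s and D = D])
    show "0 \<le> 2 * (c + 2) * \<bar>e\<bar>"
      using c_pos by simp
    show "s * (real a + real b) \<le> 2 * (c + 2) * \<bar>e\<bar> * D"
      using gap by simp
    show "D \<le> s * (real q + real q')"
      using D_le by simp
    show "real q + real q' \<le> (c + 3) * real q" "real q + real q' \<le> (c + 3) * real q'"
      using joint_state_comparable[OF st] by simp_all
  qed (use \<open>0 < s\<close> in simp_all)
  then have "(real (a + b))\<^sup>2 \<le> 2 * (c + 2) * (c + 3) * \<bar>e\<bar> * real N"
    using st by (simp add: joint_state_def algebra_simps)
  then show ?thesis
    by (simp add: real_le_rsqrt)
qed

lemma joint_state_growth:
  assumes st: "joint_state a b q q' r"
  shows "real (q + q') * (1 + 1 / (c + 3)) \<le> real (q + (q + q'))"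
    and "real (q + q') * (1 + 1 / (c + 3)) \<le> real (q + q' + q')"
proof -
  have "0 < c + 3"
    using st ratio_pos ratio_less by (force simp: joint_state_def)
  then show "real (q + q') * (1 + 1 / (c + 3)) \<le> real (q + (q + q'))"
    "real (q + q') * (1 + 1 / (c + 3)) \<le> real (q + q' + q')"
    using joint_state_comparable[OF st] by (simp_all add: field_simps)
qed

lemma joint_state_descent:
  assumes "joint_state a b q q' r"
  shows "\<exists>m. real (length (gen a b)) \<le> real m + sqrt (2 * (c + 2) * (c + 3) * \<bar>e\<bar> * real N)
             \<and> real (q + q') * (1 + 1 / (c + 3)) ^ m \<le> real N"
  using assms
proof (induction a b arbitrary: q q' r rule: gen.induct)
  case (1 a b)
  let ?X = "sqrt (2 * (c + 2) * (c + 3) * \<bar>e\<bar> * real N)"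
  let ?\<beta> = "1 + 1 / (c + 3)"
  have st: "joint_state a b q q' r" by fact
  have "0 < a" "0 < b" "r \<noteq> 1" "0 < c + 1"
    using st ratio_neq_1 ratio_pos ratio_less by (force simp: joint_state_def)+
  have stop: "\<exists>m. real (length (gen a b)) \<le> real m + ?X \<and> real (q + q') * ?\<beta> ^ m \<le> real N"
    if "real (length (gen a b)) \<le> ?X"
    using that joint_state_denominators_le[OF st] by (intro exI[of _ 0]) simp
  have continue: "\<exists>m. real (length (gen a b)) \<le> real m + ?X \<and> real (q + q') * ?\<beta> ^ m \<le> real N"
    if len: "length (gen a b) = Suc (length (gen a1 b1))"
      and grow: "real (q + q') * ?\<beta> \<le> real (q1 + q1')"
      and IH: "\<exists>m. real (length (gen a1 b1)) \<le> real m + ?X \<and> real (q1 + q1') * ?\<beta> ^ m \<le> real N"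
    for a1 b1 q1 q1'
  proof -
    obtain m where m: "real (length (gen a1 b1)) \<le> real m + ?X" "real (q1 + q1') * ?\<beta> ^ m \<le> real N"
      using IH by blast
    have "real (q + q') * ?\<beta> ^ Suc m = real (q + q') * ?\<beta> * ?\<beta> ^ m"
      by simp
    also have "\<dots> \<le> real (q1 + q1') * ?\<beta> ^ m"
      using grow \<open>0 < c + 1\<close> by (intro mult_right_mono) auto
    finally show ?thesis
      using m len by (intro exI[of _ "Suc m"]) auto
  qed
  consider "a = b" | "b < a" "1 < r" | "a < b" "r < 1" | "b < a \<and> r < 1 \<or> a < b \<and> 1 < r"
    using \<open>r \<noteq> 1\<close> by linarith
  then show ?case
  proof cases
    case 1
    then show ?thesis
      using \<open>0 < c + 1\<close> by (intro stop) (simp add: gen_diag)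
  next
    case 2
    have "\<exists>m. real (length (gen (a - b) b)) \<le> real m + ?X
        \<and> real (q + (q + q')) * ?\<beta> ^ m \<le> real N"
      using joint_state_step_A[OF st 2] 2 \<open>0 < b\<close> by (intro "1.IH"(1)) auto
    then show ?thesis
      using 2 \<open>0 < b\<close> by (intro continue[OF _ joint_state_growth(1)[OF st]]) (simp_all add: gen_gt)
  next
    case 3
    have "\<exists>m. real (length (gen a (b - a))) \<le> real m + ?X
        \<and> real (q + q' + q') * ?\<beta> ^ m \<le> real N"
      using joint_state_step_B[OF st 3] 3 \<open>0 < a\<close> by (intro "1.IH"(2)) auto
    then show ?thesis
      using 3 \<open>0 < a\<close> by (intro continue[OF _ joint_state_growth(2)[OF st]]) (simp_all add: gen_lt)
  next
    case 4
    then show ?thesis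
      using joint_state_divergence[OF st] length_gen_le[of a b] by (intro stop) linarith
  qed
qed

end

lemma joint_state_initial:
  assumes "0 < x" "x < 1" "x / (1 - x) \<in> R" "0 < a" "a < N"
  shows "joint_state (real N * x - real a) N a (N - a) 1 1 (x / (1 - x))"
proof -
  let ?r = "x / (1 - x)"
  have "?r < c + 1" "1 / ?r < c + 1"
    using ratio_less[OF assms(3)] inverse_ratio_less[OF assms(3)] by simp_all
  then have "?r + 1 < c + 2" "?r + 1 < (c + 2) * ?r"
    using assms(1,2) by (simp_all add: field_simps)
  moreover have "?r * real (N - a) - real a = (real N * x - real a) * (?r + 1)"
    using assms by (simp add: field_simps of_nat_diff)
  ultimately show ?thesis
    using assms by (simp add: joint_state_def)
qed

end

lemma sb_descent_sb_ratios:
  assumes "x \<notin> \<rat>" "pq_bounded_by x C"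
  shows "sb_descent (real_of_int C) (sb_ratios x)"
  using assms sb_ratios_pos sb_ratios_bounded sb_step_sb_ratios by unfold_locales auto

lemma real_le_ln_of_power_le:
  fixes t y :: real
  assumes "0 \<le> t" "(1 + t) ^ m \<le> y"
  shows "real m * (t / (1 + t)) \<le> ln y"
proof -
  have "real m * (t / (1 + t)) \<le> real m * ln (1 + t)"
    using ln_add1_ge[OF assms(1)] by (intro mult_left_mono) (auto simp: add.commute)
  also have "\<dots> = ln ((1 + t) ^ m)"
    using assms(1) by (simp add: ln_realpow)
  also have "\<dots> \<le> ln y"
    using assms by (intro ln_mono) auto
  finally show ?thesis .
qed

lemma sqrt_cubic_bound:
  fixes c \<delta> n :: real
  assumes "1 \<le> c" "0 \<le> \<delta>" "0 \<le> n"
  shows "sqrt (2 * (c + 2) * (c + 3) * (n * \<delta>) * n) \<le> 5 * n * sqrt (\<delta> * c ^ 3)"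
proof -
  have "2 * (c + 2) * (c + 3) \<le> 2 * (3 * c) * (4 * c)"
    using assms(1) by (intro mult_mono) auto
  also have "\<dots> \<le> 25 * c ^ 3"
    using assms(1) by (simp add: power3_eq_cube)
  finally have "2 * (c + 2) * (c + 3) * (\<delta> * n\<^sup>2) \<le> 25 * c ^ 3 * (\<delta> * n\<^sup>2)"
    using assms by (intro mult_right_mono) auto
  then have "sqrt (2 * (c + 2) * (c + 3) * (n * \<delta>) * n) \<le> sqrt (5\<^sup>2 * n\<^sup>2 * (\<delta> * c ^ 3))"
    by (simp add: power2_eq_square algebra_simps)
  also have "\<dots> = 5 * n * sqrt (\<delta> * c ^ 3)"
    using assms(3) by (simp add: real_sqrt_mult)
  finally show ?thesis .
qed

lemma descent_length_bound:
  fixes c \<delta> n l :: real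
  assumes "1 \<le> c" "0 \<le> \<delta>" "2 * (1 + 1 / (c + 3)) ^ m \<le> n"
    and "l \<le> real m + sqrt (2 * (c + 2) * (c + 3) * (n * \<delta>) * n)"
  shows "l \<le> 5 * (c * ln n + n * sqrt (\<delta> * c ^ 3))"
proof -
  have "1 \<le> (1 + 1 / (c + 3)) ^ m"
    using assms(1) by simp
  then have "1 \<le> n" "(1 + 1 / (c + 3)) ^ m \<le> n"
    using assms(3) by linarith+
  then have "real m * (1 / (c + 3) / (1 + 1 / (c + 3))) \<le> ln n"
    using assms(1) by (intro real_le_ln_of_power_le) auto
  then have "real m \<le> (c + 4) * ln n"
    using assms(1) by (simp add: field_simps)
  also have "\<dots> \<le> 5 * c * ln n"
    using assms(1) \<open>1 \<le> n\<close> by (intro mult_right_mono) auto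
  finally show ?thesis
    using assms(4) sqrt_cubic_bound[OF assms(1,2), of n] \<open>1 \<le> n\<close> by (simp add: algebra_simps)
qed

theorem theorem4:
  "\<exists>K::real. K > 0 \<and>
     (\<forall>(C::int) (\<xi>::real) (N::nat) (a::nat).
        C \<ge> 1 \<longrightarrow> 0 < \<xi> \<longrightarrow> \<xi> < 1 \<longrightarrow> \<xi> \<notin> \<rat> \<longrightarrow> pq_bounded_by \<xi> C \<longrightarrow>
        N \<ge> 2 \<longrightarrow> 1 \<le> a \<longrightarrow> a \<le> N - 1 \<longrightarrow> coprime a N \<longrightarrow>
        (let \<delta> = \<bar>\<xi> - real a / real N\<bar> in
           num_subseqs (gen a (N - a)) = N - 1 \<and>
           real (length (gen a (N - a)))
             \<le> K * (real_of_int C * ln (real N) + real N * sqrt (\<delta> * real_of_int C ^ 3))))"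
proof (intro exI[of _ 5] conjI allI impI)
  fix C :: int and \<xi> :: real and N a :: nat
  assume C: "1 \<le> C" and \<xi>: "0 < \<xi>" "\<xi> < 1" "\<xi> \<notin> \<rat>" and bounded: "pq_bounded_by \<xi> C"
    and N: "2 \<le> N" and a: "1 \<le> a" "a \<le> N - 1" and coprime: "coprime a N"
  define \<delta> where "\<delta> = \<bar>\<xi> - real a / real N\<bar>"
  interpret sb_descent "real_of_int C" "sb_ratios \<xi>"
    using \<xi>(3) bounded by (rule sb_descent_sb_ratios)
  have "joint_state (real N * \<xi> - real a) N a (N - a) 1 1 (\<xi> / (1 - \<xi>))"
    using \<xi> a N by (intro joint_state_initial sb_ratios_start) auto
  then obtain m where
    "real (length (gen a (N - a))) \<le> real m + sqrt (2 * (real_of_int C + 2) * (real_of_int C + 3)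
       * \<bar>real N * \<xi> - real a\<bar> * real N)"
    and "real (1 + 1) * (1 + 1 / (real_of_int C + 3)) ^ m \<le> real N"
    using joint_state_descent by blast
  moreover have "\<bar>real N * \<xi> - real a\<bar> = real N * \<delta>"
    using N by (simp add: \<delta>_def abs_mult[symmetric] field_simps)
  ultimately have "real (length (gen a (N - a)))
      \<le> 5 * (real_of_int C * ln (real N) + real N * sqrt (\<delta> * real_of_int C ^ 3))"
    using C by (intro descent_length_bound) (auto simp: \<delta>_def)
  moreover have "coprime a (N - a)"
    using coprime gcd_diff1_nat[of a N] a by (simp add: coprime_iff_gcd_eq_1 gcd.commute)
  then have "num_subseqs (gen a (N - a)) = N - 1"
    using num_subseqs_gen[of a "N - a"] a by simp
  ultimately show "let \<delta> = \<bar>\<xi> - real a / real N\<bar> in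
      num_subseqs (gen a (N - a)) = N - 1 \<and>
      real (length (gen a (N - a)))
        \<le> 5 * (real_of_int C * ln (real N) + real N * sqrt (\<delta> * real_of_int C ^ 3))"
    by (simp add: \<delta>_def)
qed simp

end
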